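(* Let $N\ge1$, $n=2N+1$, $L>0$, $\mu\in(0,1)$ and $\eta>4\mu n^2$. Then for any Bregman gradient algorithm applied to $(f_\mu,h_\mu)$ and initialized at $x_0=(0,\dots,0)$, the output $\bar x$ returned after performing at most $N$ calls to each one of the primal and mirror oracles satisfies \[ f_\mu(\bar x)-\min_{\mathbb{R}^n}f_\mu\ \ge\ \frac{L\,D_{h_\mu}(x_*,x_0)}{2N+1}\cdot\frac{1-\mu}{1+\mu+\eta+\frac\mu2(1+\eta)^2}. \]
   Context: $x_*=(1+\eta,1+\frac\eta2,\dots,1+\frac\eta n)$, $\hat f(x)=\|x-x_*\|_\infty$, $f_\mu(x)=\min_{u\in\mathbb{R}^n}\hat f(u)+\frac1{2\mu}\|x-u\|^2$ (Euclidean norm). $\phi_\mu(t)=t-\mu/2$ if $t\ge\mu$ and $t^2/(2\mu)$ otherwise; $d_\mu(x)=\frac\mu2\|x\|^2+\sum_{i=1}^n\phi_\mu(x^{(i)})$; $h_\mu=\frac1L(f_\mu+d_\mu)$. $D_h(x,y)=h(x)-h(y)-\langle\nabla h(y),x-y\rangle$. A Bregman gradient algorithm, applied to $(f,h)$ with $h$ having domain closure $C$, generates sets $\mathcal{V}_t$: $\mathcal{V}_0=\{x_0\}$; at each step $t$ it chooses $y_t\in\operatorname{Span}(\mathcal{V}_t)$ and either calls the primal oracle, setting $\mathcal{V}_{t+1}=\mathcal{V}_t\cup\{\nabla f(y_t),\nabla h(y_t)\}$, or calls the mirror oracle $\nabla h^*(y_t)=\operatorname{argmin}_{u\in C}h(u)-\langle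 y_t,u\rangle$, setting $\mathcal{V}_{t+1}=\mathcal{V}_t\cup\{\nabla h^*(y_t)\}$; after the last step $T$ it outputs some $\bar x\in\operatorname{Span}(\mathcal{V}_T)$. *)

theory Defs
  imports "HOL-Analysis.Analysis"
begin

text \<open>Vectors of R^n are represented as functions nat => real; coordinate k+1 of the
paper is index k (k < n), and a vector of R^n vanishes at all indices >= n.\<close>

type_synonym vec = "nat \<Rightarrow> real"

definition Rn :: "nat \<Rightarrow> vec set" where
  "Rn n = {x. \<forall>i\<ge>n. x i = 0}"

definition ip :: "nat \<Rightarrow> vec \<Rightarrow> vec \<Rightarrow> real" where
  "ip n x y = (\<Sum>i<n. x i * y i)"

definition sqnorm :: "nat \<Rightarrow> vec \<Rightarrow> real" where
  "sqnorm n x = (\<Sum>i<n. (x i)^2)"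

definition vsub :: "vec \<Rightarrow> vec \<Rightarrow> vec" where
  "vsub x y = (\<lambda>i. x i - y i)"

definition vspan :: "vec set \<Rightarrow> vec set" where
  "vspan V = {x. \<exists>S c. finite S \<and> S \<subseteq> V \<and> x = (\<lambda>i. \<Sum>v\<in>S. c v * v i)}"

definition xstar :: "real \<Rightarrow> nat \<Rightarrow> vec" where
  "xstar \<eta> n = (\<lambda>i. if i < n then 1 + \<eta> / real (i + 1) else 0)"

definition fhat :: "real \<Rightarrow> nat \<Rightarrow> vec \<Rightarrow> real" where
  "fhat \<eta> n x = Max ((\<lambda>i. \<bar>x i - xstar \<eta> n i\<bar>) ` {..<n})"

text \<open>Moreau envelope (the minimum is attained, so Inf = min).\<close>
definition fmu :: "real \<Rightarrow> real \<Rightarrow> nat \<Rightarrow> vec \<Rightarrow> real" where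
  "fmu \<eta> \<mu> n x = Inf ((\<lambda>u. fhat \<eta> n u + 1 / (2 * \<mu>) * sqnorm n (vsub x u)) ` Rn n)"

definition phimu :: "real \<Rightarrow> real \<Rightarrow> real" where
  "phimu \<mu> t = (if t \<ge> \<mu> then t - \<mu> / 2 else t^2 / (2 * \<mu>))"

definition dmu :: "real \<Rightarrow> nat \<Rightarrow> vec \<Rightarrow> real" where
  "dmu \<mu> n x = \<mu> / 2 * sqnorm n x + (\<Sum>i<n. phimu \<mu> (x i))"

definition hmu :: "real \<Rightarrow> real \<Rightarrow> real \<Rightarrow> nat \<Rightarrow> vec \<Rightarrow> real" where
  "hmu L \<eta> \<mu> n x = (fmu \<eta> \<mu> n x + dmu \<mu> n x) / L"

definition grad :: "nat \<Rightarrow> (vec \<Rightarrow> real) \<Rightarrow> vec \<Rightarrow> vec" where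
  "grad n g x = (\<lambda>i. if i < n then deriv (\<lambda>t. g (x(i := t))) (x i) else 0)"

definition bregman :: "nat \<Rightarrow> (vec \<Rightarrow> real) \<Rightarrow> vec \<Rightarrow> vec \<Rightarrow> real" where
  "bregman n h x y = h x - h y - ip n (grad n h y) (vsub x y)"

text \<open>u is a value of the mirror oracle at y: u minimizes h(u) - <y,u> over the
closure of dom h, which is all of R^n here.\<close>
definition mirror_pt :: "nat \<Rightarrow> (vec \<Rightarrow> real) \<Rightarrow> vec \<Rightarrow> vec \<Rightarrow> bool" where
  "mirror_pt n h y u \<longleftrightarrow> u \<in> Rn n \<and> (\<forall>v\<in>Rn n. h u - ip n y u \<le> h v - ip n y v)"

text \<open>A run of a Bregman gradient algorithm on (f,h) in R^n, with T steps, started at x0: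
V t are the sets of the paper, y t the query points, prim t says whether step t calls
the primal oracle (otherwise the mirror oracle, whose answer is m t), and xbar is the
output.\<close>
definition bregman_run ::
  "nat \<Rightarrow> (vec \<Rightarrow> real) \<Rightarrow> (vec \<Rightarrow> real) \<Rightarrow> vec \<Rightarrow> nat \<Rightarrow> (nat \<Rightarrow> vec set)
   \<Rightarrow> (nat \<Rightarrow> vec) \<Rightarrow> (nat \<Rightarrow> bool) \<Rightarrow> (nat \<Rightarrow> vec) \<Rightarrow> vec \<Rightarrow> bool" where
  "bregman_run n f h x0 T V y prim m xbar \<longleftrightarrow>
     V 0 = {x0} \<and>
     (\<forall>t<T. y t \<in> vspan (V t) \<and>
        (if prim t then V (Suc t) = V t \<union> {grad n f (y t), grad n h (y t)}
         else mirror_pt n h (y t) (m t) \<and> V (Suc t) = V t \<union> {m t})) \<and>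
     xbar \<in> vspan (V T)"

end

theory Submission
  imports Defs
begin

text \<open>At a point supported on the first \<open>t\<close> coordinates, the gradients of \<open>f\<^sub>\<mu>\<close> and
  \<open>h\<^sub>\<mu>\<close> and every mirror step are supported on the first \<open>t + 1\<close> coordinates.
  Consecutive coordinates of \<open>x\<^sub>*\<close> differ by more than \<open>4 \<mu>\<close>, so near such points the
  envelope \<open>f\<^sub>\<mu>\<close> only sees the first \<open>t + 1\<close> coordinates, and the strictly
  increasing penalty \<open>d\<^sub>\<mu>\<close> rules out any further nonzero coordinate in a mirror step.
  Hence after at most \<open>2 N < n\<close> oracle calls the output vanishes in the last coordinate,
  which forces \<open>f\<^sub>\<mu> \<ge> 1 - \<mu>/2\<close> there, whereas \<open>min f\<^sub>\<mu> = 0\<close> and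
  \<open>L D\<^sub>h(x\<^sub>*, 0) = d\<^sub>\<mu>(x\<^sub>*) + \<mu>/2 \<le> n (1 + \<mu> + \<eta> + \<mu>/2 (1 + \<eta>)\<^sup>2)\<close>.\<close>

lemma Rn_mono: "a \<le> b \<Longrightarrow> Rn a \<subseteq> Rn b"
  unfolding Rn_def by auto

lemma zero_in_Rn: "(\<lambda>_. 0) \<in> Rn n"
  unfolding Rn_def by auto

lemma vspan_subset_Rn: "V \<subseteq> Rn t \<Longrightarrow> vspan V \<subseteq> Rn t"
  unfolding vspan_def Rn_def by (auto intro!: sum.neutral)

lemma sqnorm_nonneg: "0 \<le> sqnorm n x"
  unfolding sqnorm_def by (auto intro: sum_nonneg)

lemma sqnorm_vsub_self: "sqnorm n (vsub x x) = 0"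
  unfolding sqnorm_def vsub_def by simp

lemma sqnorm_truncate:
  assumes "k \<le> n" "\<And>j. k \<le> j \<Longrightarrow> j < n \<Longrightarrow> z j = 0"
  shows "sqnorm n z = sqnorm k z"
  unfolding sqnorm_def by (rule sum.mono_neutral_right) (use assms in auto)

lemma mult_le_if_squares_le:
  fixes a b S :: real
  assumes "0 \<le> a" "0 \<le> b" "a^2 \<le> S" "b^2 \<le> S"
  shows "a * b \<le> S"
proof (cases "a \<le> b")
  case True
  then have "a * b \<le> b^2" using assms by (simp add: power2_eq_square mult_right_mono)
  then show ?thesis using assms by linarith
next
  case False
  then have "a * b \<le> a^2" using assms by (simp add: power2_eq_square mult_left_mono)
  then show ?thesis using assms by linarith
qed

lemma ip_cong_Rn:
  assumes "y \<in> Rn t" "\<And>j. j < t \<Longrightarrow> v j = u j"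
  shows "ip n y v = ip n y u"
  unfolding ip_def
proof (rule sum.cong)
  fix j
  show "y j * v j = y j * u j"
    using assms unfolding Rn_def by (cases "j < t") auto
qed simp

lemma sum_fun_upd:
  fixes g :: "real \<Rightarrow> real"
  assumes "finite A" "i \<in> A"
  shows "(\<Sum>j\<in>A. g ((x(i := s)) j)) = (\<Sum>j\<in>A. g (x j)) - g (x i) + g s"
proof -
  have "(\<Sum>j\<in>A - {i}. g ((x(i := s)) j)) = (\<Sum>j\<in>A - {i}. g (x j))"
    by (intro sum.cong) auto
  then have "(\<Sum>j\<in>A. g ((x(i := s)) j)) = g s + (\<Sum>j\<in>A - {i}. g (x j))"
    using sum.remove[OF assms, of "\<lambda>j. g ((x(i := s)) j)"] by simp
  also have "\<dots> = (\<Sum>j\<in>A. g (x j)) - g (x i) + g s"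
    using sum.remove[OF assms, of "\<lambda>j. g (x j)"] by linarith
  finally show ?thesis .
qed

lemma card_lessThan_filter_add: "card {t. t < T \<and> P t} + card {t. t < T \<and> \<not> P t} = T"
proof -
  have "{..<T} = {t. t < T \<and> P t} \<union> {t. t < T \<and> \<not> P t}" by auto
  then have "card {..<T} = card {t. t < T \<and> P t} + card {t. t < T \<and> \<not> P t}"
    by (simp add: card_Un_disjoint disjoint_iff)
  then show ?thesis by simp
qed

lemma xstar_antimono:
  assumes "0 \<le> \<eta>" "i \<le> j" "j < n"
  shows "xstar \<eta> n j \<le> xstar \<eta> n i"
proof -
  have "\<eta> / (real j + 1) \<le> \<eta> / (real i + 1)"
    using assms by (intro divide_left_mono) auto
  then show ?thesis
    using assms unfolding xstar_def by (auto simp: add.commute)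
qed

lemma xstar_ge_1: "0 \<le> \<eta> \<Longrightarrow> j < n \<Longrightarrow> 1 \<le> xstar \<eta> n j"
  unfolding xstar_def by auto

lemma xstar_in_Rn: "xstar \<eta> n \<in> Rn n"
  unfolding Rn_def xstar_def by auto

subsection \<open>The Moreau envelope of the shifted max-norm\<close>

lemma fhat_ge: "j < n \<Longrightarrow> \<bar>u j - xstar \<eta> n j\<bar> \<le> fhat \<eta> n u"
  unfolding fhat_def by (rule Max_ge) auto

lemma fhat_le:
  "0 < n \<Longrightarrow> (\<And>j. j < n \<Longrightarrow> \<bar>u j - xstar \<eta> n j\<bar> \<le> c) \<Longrightarrow> fhat \<eta> n u \<le> c"
  unfolding fhat_def by (rule Max.boundedI) auto

lemma fhat_attained: "0 < n \<Longrightarrow> \<exists>j<n. fhat \<eta> n u = \<bar>u j - xstar \<eta> n j\<bar>"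
proof -
  assume "0 < n"
  then have "fhat \<eta> n u \<in> (\<lambda>j. \<bar>u j - xstar \<eta> n j\<bar>) ` {..<n}"
    unfolding fhat_def by (intro Max_in) auto
  then show ?thesis by auto
qed

lemma fhat_nonneg: "0 < n \<Longrightarrow> 0 \<le> fhat \<eta> n u"
  using fhat_ge[of 0 n u \<eta>] by linarith

lemma fmu_le:
  assumes "0 < n" "0 < \<mu>" "u \<in> Rn n"
  shows "fmu \<eta> \<mu> n x \<le> fhat \<eta> n u + 1 / (2 * \<mu>) * sqnorm n (vsub x u)"
  unfolding fmu_def
proof (rule cInf_lower)
  show "bdd_below ((\<lambda>u. fhat \<eta> n u + 1 / (2 * \<mu>) * sqnorm n (vsub x u)) ` Rn n)"
    by (rule bdd_belowI[where m=0]) (use assms fhat_nonneg sqnorm_nonneg in force)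
qed (use assms in simp)

lemma fmu_ge:
  "(\<And>u. u \<in> Rn n \<Longrightarrow> c \<le> fhat \<eta> n u + 1 / (2 * \<mu>) * sqnorm n (vsub x u))
   \<Longrightarrow> c \<le> fmu \<eta> \<mu> n x"
  unfolding fmu_def by (rule cInf_greatest) (use zero_in_Rn in auto)

lemma fmu_nonneg: "0 < n \<Longrightarrow> 0 < \<mu> \<Longrightarrow> 0 \<le> fmu \<eta> \<mu> n x"
  by (rule fmu_ge) (use fhat_nonneg sqnorm_nonneg in force)

lemma fmu_xstar: "0 < n \<Longrightarrow> 0 < \<mu> \<Longrightarrow> fmu \<eta> \<mu> n (xstar \<eta> n) = 0"
  using fmu_le[of n \<mu> "xstar \<eta> n" \<eta> "xstar \<eta> n"] fmu_nonneg[of n \<mu> \<eta> "xstar \<eta> n"]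
    fhat_le[of n "xstar \<eta> n" \<eta> 0]
  by (simp add: xstar_in_Rn sqnorm_vsub_self)

lemma Inf_fmu:
  assumes "0 < n" "0 < \<mu>"
  shows "Inf (fmu \<eta> \<mu> n ` Rn n) = 0"
proof (rule antisym)
  show "Inf (fmu \<eta> \<mu> n ` Rn n) \<le> 0"
    using cInf_lower[of "fmu \<eta> \<mu> n (xstar \<eta> n)" "fmu \<eta> \<mu> n ` Rn n"]
      fmu_nonneg[OF assms] fmu_xstar[OF assms] xstar_in_Rn
    by (metis bdd_belowI2 imageI)
  show "0 \<le> Inf (fmu \<eta> \<mu> n ` Rn n)"
    by (rule cInf_greatest) (use fmu_nonneg[OF assms] zero_in_Rn in auto)
qed

lemma fmu_cong: "(\<And>j. j < n \<Longrightarrow> x j = x' j) \<Longrightarrow> fmu \<eta> \<mu> n x = fmu \<eta> \<mu> n x'"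
  unfolding fmu_def sqnorm_def vsub_def
  by (intro arg_cong[where f=Inf] image_cong refl) (auto intro!: sum.cong)

lemma fmu_ge_coord:
  assumes "0 < \<mu>" "j < n"
  shows "xstar \<eta> n j - x j - \<mu> / 2 \<le> fmu \<eta> \<mu> n x"
proof (rule fmu_ge)
  fix u assume "u \<in> Rn n"
  define a where "a = u j - x j"
  have "0 \<le> (\<bar>a\<bar> - \<mu>)^2" by simp
  then have "\<bar>a\<bar> - \<mu> / 2 \<le> 1 / (2 * \<mu>) * a^2"
    using assms(1) by (simp add: field_simps power2_eq_square)
  moreover have "\<bar>u j - xstar \<eta> n j\<bar> \<le> fhat \<eta> n u" by (rule fhat_ge[OF assms(2)])
  moreover have "a^2 \<le> sqnorm n (vsub x u)"
    unfolding sqnorm_def vsub_def a_def power2_commute[of "u j"]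
    by (rule member_le_sum) (use assms in auto)
  ultimately show "xstar \<eta> n j - x j - \<mu> / 2 \<le> fhat \<eta> n u + 1 / (2 * \<mu>) * sqnorm n (vsub x u)"
    unfolding a_def using assms(1)
    by (smt (verit) divide_right_mono mult_left_mono zero_le_divide_1_iff)
qed

lemma fmu_fun_upd_le:
  assumes "0 < \<mu>" "i < n"
  shows "fmu \<eta> \<mu> n (x(i := s)) \<le> fmu \<eta> \<mu> n x + \<bar>s - x i\<bar>"
proof -
  have "fmu \<eta> \<mu> n (x(i := s)) - \<bar>s - x i\<bar> \<le> fmu \<eta> \<mu> n x"
  proof (rule fmu_ge)
    fix u assume u: "u \<in> Rn n"
    define u' where "u' = u(i := u i + s - x i)"
    have u'_Rn: "u' \<in> Rn n" using u assms unfolding u'_def Rn_def by auto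
    have "fhat \<eta> n u' \<le> fhat \<eta> n u + \<bar>s - x i\<bar>"
    proof (rule fhat_le)
      fix j assume "j < n"
      then show "\<bar>u' j - xstar \<eta> n j\<bar> \<le> fhat \<eta> n u + \<bar>s - x i\<bar>"
        using fhat_ge[of j n u \<eta>] unfolding u'_def by (cases "j = i") auto
    qed (use assms in simp)
    moreover have "vsub (x(i := s)) u' = vsub x u" unfolding vsub_def u'_def by auto
    ultimately show "fmu \<eta> \<mu> n (x(i := s)) - \<bar>s - x i\<bar>
        \<le> fhat \<eta> n u + 1 / (2 * \<mu>) * sqnorm n (vsub x u)"
      using fmu_le[OF _ assms(1) u'_Rn, of \<eta> "x(i := s)"] assms by simp
  qed
  then show ?thesis by linarith
qed

lemma fmu_axis:
  assumes "0 < \<mu>" "0 < n" "4 * \<mu> < \<eta>" "\<bar>s\<bar> < \<mu>"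
  shows "fmu \<eta> \<mu> n ((\<lambda>_. 0)(0 := s)) = 1 + \<eta> - s - \<mu> / 2"
proof (rule antisym)
  have x0: "xstar \<eta> n 0 = 1 + \<eta>" using assms(2) unfolding xstar_def by simp
  then show "1 + \<eta> - s - \<mu> / 2 \<le> fmu \<eta> \<mu> n ((\<lambda>_. 0)(0 := s))"
    using fmu_ge_coord[OF assms(1,2), of \<eta> "(\<lambda>_. 0)(0 := s)"] by simp
  define u :: vec where "u = (\<lambda>_. 0)(0 := s + \<mu>)"
  have u_Rn: "u \<in> Rn n" using assms(2) unfolding u_def Rn_def by auto
  have "fhat \<eta> n u \<le> 1 + \<eta> - s - \<mu>"
  proof (rule fhat_le[OF assms(2)])
    fix j assume j: "j < n"
    show "\<bar>u j - xstar \<eta> n j\<bar> \<le> 1 + \<eta> - s - \<mu>"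
    proof (cases "j = 0")
      case False
      have "xstar \<eta> n j \<le> xstar \<eta> n 1" using False j assms by (intro xstar_antimono) auto
      moreover have "xstar \<eta> n 1 = 1 + \<eta> / 2" using False j unfolding xstar_def by simp
      moreover have "\<bar>u j - xstar \<eta> n j\<bar> = xstar \<eta> n j"
        using False j assms xstar_ge_1[of \<eta> j n] unfolding u_def by simp
      ultimately show ?thesis using assms by linarith
    qed (use x0 assms in \<open>auto simp: u_def\<close>)
  qed
  moreover have "sqnorm n (vsub ((\<lambda>_. 0)(0 := s)) u) = \<mu>^2"
  proof -
    have "sqnorm n (vsub ((\<lambda>_. 0)(0 := s)) u) = (\<Sum>j<n. if j = 0 then \<mu>^2 else 0)"
      unfolding sqnorm_def vsub_def u_def by (intro sum.cong) auto
    then show ?thesis using assms(2) by simp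
  qed
  moreover have "1 / (2 * \<mu>) * \<mu>^2 = \<mu> / 2"
    using assms(1) by (simp add: power2_eq_square)
  ultimately show "fmu \<eta> \<mu> n ((\<lambda>_. 0)(0 := s)) \<le> 1 + \<eta> - s - \<mu> / 2"
    using fmu_le[OF assms(2,1) u_Rn, of \<eta> "(\<lambda>_. 0)(0 := s)"] by simp
qed

lemma fhat_le_of_far:
  assumes "0 < \<mu>" "t < k" "2 * \<mu> \<le> \<bar>x t - u t\<bar>"
  shows "fhat \<eta> k x \<le> fhat \<eta> k u + 1 / (2 * \<mu>) * sqnorm k (vsub x u)"
proof -
  obtain j where j: "j < k" "fhat \<eta> k x = \<bar>x j - xstar \<eta> k j\<bar>"
    using fhat_attained[of k \<eta> x] assms(2) by auto
  have "(2 * \<mu>)^2 \<le> \<bar>x t - u t\<bar>^2" using assms(1,3) by (intro power_mono) auto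
  moreover have "(x t - u t)^2 \<le> sqnorm k (vsub x u)" "(x j - u j)^2 \<le> sqnorm k (vsub x u)"
    unfolding sqnorm_def vsub_def by (rule member_le_sum, use assms(2) j in auto)+
  ultimately have "2 * \<mu> * \<bar>x j - u j\<bar> \<le> sqnorm k (vsub x u)"
    using assms(1) by (intro mult_le_if_squares_le) auto
  then have "\<bar>x j - u j\<bar> \<le> 1 / (2 * \<mu>) * sqnorm k (vsub x u)"
    using assms(1) by (simp add: field_simps)
  then show ?thesis
    using j fhat_ge[of j k u \<eta>] by linarith
qed

lemma fmu_truncation_le:
  assumes "0 < \<mu>" "0 < k" "k \<le> n"
  shows "fmu \<eta> \<mu> k x \<le> fmu \<eta> \<mu> n x"
proof (rule fmu_ge)
  fix u assume "u \<in> Rn n"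
  define u' where "u' = (\<lambda>j. if j < k then u j else 0)"
  have u'_Rn: "u' \<in> Rn k" unfolding u'_def Rn_def by auto
  have "fhat \<eta> k u' \<le> fhat \<eta> n u"
  proof (rule fhat_le[OF assms(2)])
    fix j assume "j < k"
    then show "\<bar>u' j - xstar \<eta> k j\<bar> \<le> fhat \<eta> n u"
      using fhat_ge[of j n u \<eta>] assms(3) unfolding u'_def xstar_def by simp
  qed
  moreover have "sqnorm k (vsub x u') \<le> sqnorm n (vsub x u)"
  proof -
    have "sqnorm k (vsub x u') = sqnorm k (vsub x u)"
      unfolding sqnorm_def vsub_def u'_def by (intro sum.cong) auto
    also have "\<dots> \<le> sqnorm n (vsub x u)"
      unfolding sqnorm_def using assms(3) by (intro sum_mono2) auto
    finally show ?thesis .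
  qed
  then have "1 / (2 * \<mu>) * sqnorm k (vsub x u') \<le> 1 / (2 * \<mu>) * sqnorm n (vsub x u)"
    using assms(1) by (intro mult_left_mono) auto
  ultimately show "fmu \<eta> \<mu> k x \<le> fhat \<eta> n u + 1 / (2 * \<mu>) * sqnorm n (vsub x u)"
    using fmu_le[OF assms(2,1) u'_Rn, of \<eta> x] by linarith
qed

text \<open>A competitor \<open>u\<close> in the \<open>k\<close>-dimensional envelope either pays at least \<open>B\<close>, and
  then may copy the remaining coordinates from \<open>x\<close> for free, or it is off from \<open>x\<close> by
  \<open>2 \<mu>\<close> in coordinate \<open>t\<close>, and then the quadratic term makes it worse than \<open>x\<close> itself.\<close>

lemma fmu_le_truncation:
  assumes "0 < \<mu>" "t < k" "k \<le> n" "x \<in> Rn n"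
    and far: "B + 2 * \<mu> \<le> \<bar>x t - xstar \<eta> n t\<bar>"
    and near: "\<And>j. k \<le> j \<Longrightarrow> j < n \<Longrightarrow> \<bar>x j - xstar \<eta> n j\<bar> \<le> B"
  shows "fmu \<eta> \<mu> n x \<le> fmu \<eta> \<mu> k x"
proof (rule fmu_ge)
  have k: "0 < k" "0 < n" using assms by auto
  have xstar_k: "xstar \<eta> k j = xstar \<eta> n j" if "j < k" for j
    using that assms(3) unfolding xstar_def by simp
  fix u assume u: "u \<in> Rn k"
  show "fmu \<eta> \<mu> n x \<le> fhat \<eta> k u + 1 / (2 * \<mu>) * sqnorm k (vsub x u)"
  proof (cases "B \<le> fhat \<eta> k u")
    case True
    define u' where "u' = (\<lambda>j. if j < k then u j else x j)"
    have u'_Rn: "u' \<in> Rn n" using u assms(3,4) unfolding u'_def Rn_def by auto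
    have "fhat \<eta> n u' \<le> fhat \<eta> k u"
    proof (rule fhat_le[OF k(2)])
      fix j assume "j < n"
      show "\<bar>u' j - xstar \<eta> n j\<bar> \<le> fhat \<eta> k u"
      proof (cases "j < k")
        case True
        then show ?thesis using fhat_ge[of j k u \<eta>] xstar_k[of j] unfolding u'_def by simp
      next
        case False
        then show ?thesis using near[of j] \<open>j < n\<close> \<open>B \<le> fhat \<eta> k u\<close> unfolding u'_def by simp
      qed
    qed
    moreover have sq: "sqnorm n (vsub x u') = sqnorm k (vsub x u)"
    proof -
      have "sqnorm n (vsub x u') = sqnorm k (vsub x u')"
        by (rule sqnorm_truncate) (use assms(3) in \<open>auto simp: u'_def vsub_def\<close>)
      also have "\<dots> = sqnorm k (vsub x u)"
        unfolding sqnorm_def vsub_def u'_def by (intro sum.cong) auto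
      finally show ?thesis .
    qed
    ultimately show ?thesis
      using fmu_le[OF k(2) assms(1) u'_Rn, of \<eta> x] unfolding sq by linarith
  next
    case False
    have "fmu \<eta> \<mu> n x \<le> fhat \<eta> n x"
      using fmu_le[OF k(2) assms(1,4), of \<eta> x] by (simp add: sqnorm_vsub_self)
    also have "\<dots> \<le> fhat \<eta> k x"
    proof (rule fhat_le[OF k(2)])
      have margin: "B + 2 * \<mu> \<le> fhat \<eta> k x" using far fhat_ge[of t k x \<eta>] xstar_k assms(2) by simp
      fix j assume "j < n"
      show "\<bar>x j - xstar \<eta> n j\<bar> \<le> fhat \<eta> k x"
      proof (cases "j < k")
        case True
        then show ?thesis using fhat_ge[of j k x \<eta>] xstar_k[of j] by simp
      next
        case False
        then show ?thesis using near[of j] \<open>j < n\<close> margin assms(1) by simp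
      qed
    qed
    also have "\<dots> \<le> fhat \<eta> k u + 1 / (2 * \<mu>) * sqnorm k (vsub x u)"
    proof (rule fhat_le_of_far[OF assms(1,2)])
      have "\<bar>u t - xstar \<eta> n t\<bar> < B" using fhat_ge[of t k u \<eta>] False xstar_k assms(2) by simp
      then show "2 * \<mu> \<le> \<bar>x t - u t\<bar>" using far by linarith
    qed
    finally show ?thesis by simp
  qed
qed

subsection \<open>The regulariser\<close>

lemma phimu_0: "0 < \<mu> \<Longrightarrow> phimu \<mu> 0 = 0"
  unfolding phimu_def by simp

lemma phimu_nonneg: "0 < \<mu> \<Longrightarrow> 0 \<le> phimu \<mu> t"
  unfolding phimu_def by auto

lemma phimu_small: "\<bar>t\<bar> < \<mu> \<Longrightarrow> phimu \<mu> t = t^2 / (2 * \<mu>)"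
  unfolding phimu_def by auto

lemma phimu_le:
  assumes "0 < \<mu>" "0 \<le> t"
  shows "phimu \<mu> t \<le> t"
proof (cases "\<mu> \<le> t")
  case False
  then have "t * t \<le> t * (2 * \<mu>)" using assms by (intro mult_left_mono) auto
  then show ?thesis
    using False assms unfolding phimu_def by (simp add: power2_eq_square divide_le_eq)
qed (use assms in \<open>simp add: phimu_def\<close>)

lemma dmu_eq_sum: "dmu \<mu> n x = (\<Sum>j<n. \<mu> / 2 * (x j)^2 + phimu \<mu> (x j))"
  unfolding dmu_def sqnorm_def by (simp add: sum.distrib sum_distrib_left)

lemma dmu_zero: "0 < \<mu> \<Longrightarrow> dmu \<mu> n (\<lambda>_. 0) = 0"
  unfolding dmu_eq_sum by (simp add: phimu_0)

lemma dmu_fun_upd_small: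
  assumes "0 < \<mu>" "i < n" "x i = 0" "\<bar>s\<bar> < \<mu>"
  shows "dmu \<mu> n (x(i := s)) = dmu \<mu> n x + (\<mu> / 2 + 1 / (2 * \<mu>)) * s^2"
  unfolding dmu_eq_sum
  using sum_fun_upd[of "{..<n}" i "\<lambda>v. \<mu> / 2 * v^2 + phimu \<mu> v" x s] assms
  by (simp add: phimu_0 phimu_small algebra_simps)

lemma dmu_xstar_le:
  assumes "0 < \<mu>" "0 \<le> \<eta>"
  shows "dmu \<mu> n (xstar \<eta> n) \<le> real n * (\<mu> / 2 * (1 + \<eta>)^2 + (1 + \<eta>))"
proof -
  have "dmu \<mu> n (xstar \<eta> n) \<le> real (card {..<n}) * (\<mu> / 2 * (1 + \<eta>)^2 + (1 + \<eta>))"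
    unfolding dmu_eq_sum
  proof (rule sum_bounded_above)
    fix j assume "j \<in> {..<n}"
    then have "1 \<le> xstar \<eta> n j" "xstar \<eta> n j \<le> 1 + \<eta>"
      using xstar_ge_1[of \<eta> j n] xstar_antimono[of \<eta> 0 j n] assms(2)
      by (auto simp: xstar_def)
    then have "(xstar \<eta> n j)^2 \<le> (1 + \<eta>)^2" "phimu \<mu> (xstar \<eta> n j) \<le> 1 + \<eta>"
      using phimu_le[OF assms(1), of "xstar \<eta> n j"] by (auto intro: power_mono)
    then show "\<mu> / 2 * (xstar \<eta> n j)^2 + phimu \<mu> (xstar \<eta> n j) \<le> \<mu> / 2 * (1 + \<eta>)^2 + (1 + \<eta>)"
      using assms(1) by (smt (verit) mult_left_mono half_gt_zero)
  qed
  then show ?thesis by simp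
qed

lemma grad_eq_of_local_quadratic:
  assumes "i < n" "y i = 0" "0 < r"
    and "\<And>s. \<bar>s\<bar> < r \<Longrightarrow> g (y(i := s)) = a + b * s + c * s^2"
  shows "grad n g y i = b"
proof -
  have "((\<lambda>s. a + b * s + c * s^2) has_field_derivative b) (at 0)"
    by (auto intro!: derivative_eq_intros)
  then have "((\<lambda>s. g (y(i := s))) has_field_derivative b) (at 0)"
    by (rule has_field_derivative_transform_within_open[of _ _ _ "ball 0 r"])
      (use assms in auto)
  then show ?thesis
    unfolding grad_def using assms(1,2) by (simp add: DERIV_imp_deriv)
qed

lemma mirror_pt_le:
  assumes "mirror_pt n h y u" "y \<in> Rn t" "v \<in> Rn n" "\<And>j. j < t \<Longrightarrow> v j = u j"
  shows "h u \<le> h v"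
  using assms ip_cong_Rn[OF assms(2,4), where n=n] unfolding mirror_pt_def by force

subsection \<open>The zero-chain property\<close>

locale hard_instance =
  fixes \<eta> \<mu> :: real and n :: nat
  assumes mu_pos: "0 < \<mu>" and n_pos: "0 < n" and eta_large: "4 * \<mu> * real n ^ 2 < \<eta>"
begin

lemma eta_gt: "4 * \<mu> < \<eta>"
proof -
  have "4 * \<mu> * 1 \<le> 4 * \<mu> * real n ^ 2"
    using mu_pos n_pos by (intro mult_left_mono) (auto simp: one_le_power)
  then show ?thesis using eta_large by linarith
qed

lemma eta_pos: "0 < \<eta>"
  using eta_gt mu_pos by linarith

text \<open>This is where \<open>\<eta> > 4 \<mu> n\<^sup>2\<close> enters: consecutive coordinates of \<open>xstar\<close>
  differ by \<open>\<eta> / ((t + 1) (t + 2)) \<ge> \<eta> / n\<^sup>2\<close>.\<close>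

lemma xstar_gap:
  assumes "t + 1 < n"
  shows "xstar \<eta> n (t + 1) + 4 * \<mu> < xstar \<eta> n t"
proof -
  define a where "a = real t + 1"
  have a: "0 < a" "a + 1 \<le> real n" using assms unfolding a_def by auto
  have "a * (a + 1) \<le> real n * real n" using a by (intro mult_mono) auto
  then have "4 * \<mu> * (a * (a + 1)) \<le> 4 * \<mu> * real n ^ 2"
    using mu_pos by (simp add: power2_eq_square)
  then have "4 * \<mu> < \<eta> / (a * (a + 1))"
    using eta_large a by (simp add: less_divide_eq)
  also have "\<eta> / (a * (a + 1)) = \<eta> / a - \<eta> / (a + 1)"
    using a by (simp add: field_simps)
  finally show ?thesis
    using assms unfolding a_def xstar_def by (simp add: add.commute add.left_commute)
qed

lemma fmu_eq_fmu_Suc: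
  assumes "x \<in> Rn n" "t + 1 < n" "x t \<le> \<mu>" "\<And>j. t < j \<Longrightarrow> \<bar>x j\<bar> \<le> \<mu>"
  shows "fmu \<eta> \<mu> n x = fmu \<eta> \<mu> (Suc t) x"
proof (rule antisym)
  show "fmu \<eta> \<mu> n x \<le> fmu \<eta> \<mu> (Suc t) x"
  proof (rule fmu_le_truncation[OF mu_pos _ _ assms(1), of t _ "xstar \<eta> n (t + 1) + \<mu>"])
    show "xstar \<eta> n (t + 1) + \<mu> + 2 * \<mu> \<le> \<bar>x t - xstar \<eta> n t\<bar>"
      using xstar_gap[OF assms(2)] assms(3) by linarith
    fix j assume "Suc t \<le> j" "j < n"
    then have "xstar \<eta> n j \<le> xstar \<eta> n (t + 1)" "1 \<le> xstar \<eta> n j"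
      using eta_pos by (auto intro: xstar_antimono xstar_ge_1)
    then show "\<bar>x j - xstar \<eta> n j\<bar> \<le> xstar \<eta> n (t + 1) + \<mu>"
      using assms(4)[of j] \<open>Suc t \<le> j\<close> by linarith
  qed (use assms in auto)
  show "fmu \<eta> \<mu> (Suc t) x \<le> fmu \<eta> \<mu> n x"
    by (rule fmu_truncation_le) (use mu_pos assms in auto)
qed

lemma fmu_fun_upd_beyond:
  assumes "y \<in> Rn t" "t < i" "i < n" "\<bar>s\<bar> \<le> \<mu>"
  shows "fmu \<eta> \<mu> n (y(i := s)) = fmu \<eta> \<mu> n y"
proof -
  have y0: "y j = 0" if "t \<le> j" for j using assms(1) that unfolding Rn_def by auto
  have y_Rn: "y \<in> Rn n" using assms Rn_mono[of t n] by auto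
  then have "y(i := s) \<in> Rn n" using assms(3) unfolding Rn_def by auto
  then have "fmu \<eta> \<mu> n (y(i := s)) = fmu \<eta> \<mu> (Suc t) (y(i := s))"
    by (rule fmu_eq_fmu_Suc) (use assms y0 mu_pos in auto)
  also have "\<dots> = fmu \<eta> \<mu> (Suc t) y"
    by (rule fmu_cong) (use assms in auto)
  also have "\<dots> = fmu \<eta> \<mu> n y"
    by (rule fmu_eq_fmu_Suc[symmetric]) (use y_Rn assms y0 mu_pos in auto)
  finally show ?thesis .
qed

lemma grad_fmu_in_Rn:
  assumes "y \<in> Rn t"
  shows "grad n (fmu \<eta> \<mu> n) y \<in> Rn (Suc t)"
  unfolding Rn_def
proof (intro CollectI allI impI)
  fix i assume "Suc t \<le> i"
  show "grad n (fmu \<eta> \<mu> n) y i = 0"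
  proof (cases "i < n")
    case True
    show ?thesis
      by (rule grad_eq_of_local_quadratic[where r=\<mu> and a="fmu \<eta> \<mu> n y" and c=0])
        (use assms \<open>Suc t \<le> i\<close> True mu_pos fmu_fun_upd_beyond in \<open>auto simp: Rn_def\<close>)
  qed (simp add: grad_def)
qed

lemma hmu_fun_upd_beyond:
  assumes "y \<in> Rn t" "t < i" "i < n" "\<bar>s\<bar> < \<mu>"
  shows "hmu L \<eta> \<mu> n (y(i := s)) = hmu L \<eta> \<mu> n y + (\<mu> / 2 + 1 / (2 * \<mu>)) / L * s^2"
proof -
  have "y i = 0" using assms(1,2) unfolding Rn_def by auto
  then have "dmu \<mu> n (y(i := s)) = dmu \<mu> n y + (\<mu> / 2 + 1 / (2 * \<mu>)) * s^2"
    using mu_pos assms by (intro dmu_fun_upd_small) auto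
  moreover have "fmu \<eta> \<mu> n (y(i := s)) = fmu \<eta> \<mu> n y"
    using fmu_fun_upd_beyond assms by simp
  ultimately show ?thesis
    unfolding hmu_def by (cases "L = 0") (simp_all add: field_simps)
qed

lemma grad_hmu_in_Rn:
  assumes "y \<in> Rn t"
  shows "grad n (hmu L \<eta> \<mu> n) y \<in> Rn (Suc t)"
  unfolding Rn_def
proof (intro CollectI allI impI)
  fix i assume "Suc t \<le> i"
  show "grad n (hmu L \<eta> \<mu> n) y i = 0"
  proof (cases "i < n")
    case True
    show ?thesis
      by (rule grad_eq_of_local_quadratic[where r=\<mu> and a="hmu L \<eta> \<mu> n y"
            and c="(\<mu> / 2 + 1 / (2 * \<mu>)) / L"])
        (use assms \<open>Suc t \<le> i\<close> True mu_pos hmu_fun_upd_beyond in \<open>auto simp: Rn_def\<close>)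
  qed (simp add: grad_def)
qed

lemma grad_hmu_zero: "grad n (hmu L \<eta> \<mu> n) (\<lambda>_. 0) = (\<lambda>i. if i = 0 then - 1 / L else 0)"
proof
  fix i
  show "grad n (hmu L \<eta> \<mu> n) (\<lambda>_. 0) i = (if i = 0 then - 1 / L else 0)"
  proof (cases "i = 0")
    case True
    have "grad n (hmu L \<eta> \<mu> n) (\<lambda>_. 0) 0 = - 1 / L"
    proof (rule grad_eq_of_local_quadratic[OF n_pos _ mu_pos,
          where a="(1 + \<eta> - \<mu> / 2) / L" and c="(\<mu> / 2 + 1 / (2 * \<mu>)) / L"])
      fix s :: real assume s: "\<bar>s\<bar> < \<mu>"
      have "dmu \<mu> n ((\<lambda>_. 0)(0 := s)) = (\<mu> / 2 + 1 / (2 * \<mu>)) * s^2"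
        using dmu_fun_upd_small[OF mu_pos n_pos, of "\<lambda>_. 0" s] dmu_zero[OF mu_pos] s by simp
      then show "hmu L \<eta> \<mu> n ((\<lambda>_. 0)(0 := s))
          = (1 + \<eta> - \<mu> / 2) / L + - 1 / L * s + (\<mu> / 2 + 1 / (2 * \<mu>)) / L * s^2"
        unfolding hmu_def fmu_axis[OF mu_pos n_pos eta_gt s]
        by (cases "L = 0") (simp_all add: field_simps)
    qed simp
    then show ?thesis using True by simp
  next
    case False
    then show ?thesis
      using grad_hmu_in_Rn[OF zero_in_Rn[of 0], where L=L] unfolding Rn_def by simp
  qed
qed

lemma L_bregman_hmu:
  assumes "L \<noteq> 0"
  shows "L * bregman n (hmu L \<eta> \<mu> n) (xstar \<eta> n) (\<lambda>_. 0) = dmu \<mu> n (xstar \<eta> n) + \<mu> / 2"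
proof -
  have "ip n (grad n (hmu L \<eta> \<mu> n) (\<lambda>_. 0)) (vsub (xstar \<eta> n) (\<lambda>_. 0))
      = (\<Sum>i<n. if i = 0 then - 1 / L * xstar \<eta> n 0 else 0)"
    unfolding grad_hmu_zero ip_def vsub_def by (intro sum.cong) auto
  also have "\<dots> = - ((1 + \<eta>) / L)"
    using n_pos unfolding xstar_def by simp
  finally have ip: "ip n (grad n (hmu L \<eta> \<mu> n) (\<lambda>_. 0)) (vsub (xstar \<eta> n) (\<lambda>_. 0))
      = - ((1 + \<eta>) / L)" .
  have hx: "hmu L \<eta> \<mu> n (xstar \<eta> n) = dmu \<mu> n (xstar \<eta> n) / L"
    unfolding hmu_def fmu_xstar[OF n_pos mu_pos] by simp
  have h0: "hmu L \<eta> \<mu> n (\<lambda>_. 0) = (1 + \<eta> - \<mu> / 2) / L"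
  proof -
    have "((\<lambda>_. 0)(0 := 0) :: vec) = (\<lambda>_. 0)" by auto
    then show ?thesis
      using fmu_axis[OF mu_pos n_pos eta_gt, of 0] mu_pos
      unfolding hmu_def dmu_zero[OF mu_pos] by simp
  qed
  show ?thesis
    unfolding bregman_def ip hx h0 using assms by (simp add: field_simps)
qed

lemma L_bregman_hmu_le:
  assumes "0 < L"
  shows "L * bregman n (hmu L \<eta> \<mu> n) (xstar \<eta> n) (\<lambda>_. 0)
    \<le> real n * (1 + \<mu> + \<eta> + \<mu> / 2 * (1 + \<eta>)^2)"
proof -
  have "\<mu> / 2 \<le> real n * \<mu>"
    using n_pos mu_pos by (simp add: mult_right_mono)
  then show ?thesis
    using L_bregman_hmu[of L] dmu_xstar_le[OF mu_pos, of \<eta> n] eta_pos assms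
    by (simp add: algebra_simps)
qed

text \<open>Clipping a coordinate above \<open>\<mu>\<close> down to \<open>\<mu>\<close> raises \<open>fmu\<close> by at most the amount
  by which the linear part of \<open>phimu\<close> drops; the quadratic part of \<open>dmu\<close> makes the
  decrease strict.\<close>

lemma hmu_clip_less:
  assumes "0 < L" "t < n" "\<mu> < u t"
  shows "hmu L \<eta> \<mu> n (u(t := \<mu>)) < hmu L \<eta> \<mu> n u"
proof -
  have "fmu \<eta> \<mu> n (u(t := \<mu>)) \<le> fmu \<eta> \<mu> n u + (u t - \<mu>)"
    using fmu_fun_upd_le[OF mu_pos assms(2), of \<eta> u \<mu>] assms(3) by simp
  moreover have "dmu \<mu> n (u(t := \<mu>))
      = dmu \<mu> n u - (\<mu> / 2 * (u t)^2 + phimu \<mu> (u t)) + (\<mu> / 2 * \<mu>^2 + phimu \<mu> \<mu>)"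
    unfolding dmu_eq_sum by (rule sum_fun_upd) (use assms(2) in auto)
  moreover have "phimu \<mu> (u t) = u t - \<mu> / 2" "phimu \<mu> \<mu> = \<mu> / 2"
    using assms(3) unfolding phimu_def by auto
  moreover have "\<mu> / 2 * \<mu>^2 < \<mu> / 2 * (u t)^2"
    using assms(3) mu_pos by (intro mult_strict_left_mono power_strict_mono) auto
  ultimately have "fmu \<eta> \<mu> n (u(t := \<mu>)) + dmu \<mu> n (u(t := \<mu>)) < fmu \<eta> \<mu> n u + dmu \<mu> n u"
    by linarith
  then show ?thesis
    unfolding hmu_def using assms(1) by (simp add: divide_strict_right_mono)
qed

lemma hmu_truncate_less:
  assumes "0 < L" "u \<in> Rn n" "t + 1 < n" "u t \<le> \<mu>" "t < j" "u j \<noteq> 0"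
  shows "hmu L \<eta> \<mu> n (\<lambda>i. if i \<le> t then u i else 0) < hmu L \<eta> \<mu> n u"
proof -
  define v where "v = (\<lambda>i. if i \<le> t then u i else 0)"
  have v_Rn: "v \<in> Rn n" using assms(2) unfolding v_def Rn_def by auto
  have j: "j < n" using assms(2,6) unfolding Rn_def by (metis (mono_tags) mem_Collect_eq not_le)
  have "fmu \<eta> \<mu> n v = fmu \<eta> \<mu> (Suc t) v"
    by (rule fmu_eq_fmu_Suc[OF v_Rn assms(3)]) (use assms(4) mu_pos in \<open>auto simp: v_def\<close>)
  also have "\<dots> = fmu \<eta> \<mu> (Suc t) u"
    by (rule fmu_cong) (simp add: v_def)
  also have "\<dots> \<le> fmu \<eta> \<mu> n u"
    by (rule fmu_truncation_le) (use mu_pos assms(3) in auto)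
  finally have "fmu \<eta> \<mu> n v \<le> fmu \<eta> \<mu> n u" .
  moreover have "dmu \<mu> n v < dmu \<mu> n u"
    unfolding dmu_eq_sum
  proof (rule sum_strict_mono_ex1)
    show "\<forall>i\<in>{..<n}. \<mu> / 2 * (v i)^2 + phimu \<mu> (v i) \<le> \<mu> / 2 * (u i)^2 + phimu \<mu> (u i)"
      using phimu_nonneg[OF mu_pos] phimu_0[OF mu_pos] mu_pos unfolding v_def by auto
    have "0 < \<mu> / 2 * (u j)^2 + phimu \<mu> (u j)"
      using assms(6) mu_pos phimu_nonneg[OF mu_pos, of "u j"] by (simp add: add_pos_nonneg)
    then show "\<exists>i\<in>{..<n}. \<mu> / 2 * (v i)^2 + phimu \<mu> (v i) < \<mu> / 2 * (u i)^2 + phimu \<mu> (u i)"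
      using j assms(5) phimu_0[OF mu_pos] unfolding v_def by (intro bexI[of _ j]) auto
  qed simp
  ultimately have "hmu L \<eta> \<mu> n v < hmu L \<eta> \<mu> n u"
    unfolding hmu_def using assms(1) by (simp add: divide_strict_right_mono)
  then show ?thesis unfolding v_def .
qed

lemma mirror_pt_in_Rn:
  assumes "0 < L" "y \<in> Rn t" "mirror_pt n (hmu L \<eta> \<mu> n) y u"
  shows "u \<in> Rn (Suc t)"
proof -
  have u_Rn: "u \<in> Rn n" using assms(3) unfolding mirror_pt_def by simp
  show ?thesis
  proof (cases "t + 1 < n")
    case False
    then show ?thesis using u_Rn Rn_mono[of n "Suc t"] by auto
  next
    case True
    have ut: "u t \<le> \<mu>"
    proof (rule ccontr)
      assume "\<not> u t \<le> \<mu>"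
      then have "hmu L \<eta> \<mu> n (u(t := \<mu>)) < hmu L \<eta> \<mu> n u"
        using True by (intro hmu_clip_less[OF assms(1)]) auto
      moreover have "hmu L \<eta> \<mu> n u \<le> hmu L \<eta> \<mu> n (u(t := \<mu>))"
        by (rule mirror_pt_le[OF assms(3,2)]) (use u_Rn True in \<open>auto simp: Rn_def\<close>)
      ultimately show False by simp
    qed
    show ?thesis
    proof (rule ccontr)
      assume "u \<notin> Rn (Suc t)"
      then obtain j where j: "t < j" "u j \<noteq> 0" unfolding Rn_def by (auto simp: Suc_le_eq)
      have "hmu L \<eta> \<mu> n (\<lambda>i. if i \<le> t then u i else 0) < hmu L \<eta> \<mu> n u"
        by (rule hmu_truncate_less[OF assms(1) u_Rn True ut j])
      moreover have "hmu L \<eta> \<mu> n u \<le> hmu L \<eta> \<mu> n (\<lambda>i. if i \<le> t then u i else 0)"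
        by (rule mirror_pt_le[OF assms(3,2)]) (use u_Rn in \<open>auto simp: Rn_def\<close>)
      ultimately show False by simp
    qed
  qed
qed

lemma bregman_run_output_in_Rn:
  assumes "0 < L" "bregman_run n (fmu \<eta> \<mu> n) (hmu L \<eta> \<mu> n) (\<lambda>_. 0) T V y prim m xbar"
  shows "xbar \<in> Rn T"
proof -
  note run = assms(2)[unfolded bregman_run_def]
  note step = run[THEN conjunct2, THEN conjunct1, rule_format]
  have "V t \<subseteq> Rn t" if "t \<le> T" for t
    using that
  proof (induction t)
    case 0
    then show ?case using run[THEN conjunct1] zero_in_Rn by simp
  next
    case (Suc t)
    then have tT: "t < T" and V: "V t \<subseteq> Rn t" by simp_all
    have y: "y t \<in> Rn t" using step[OF tT, THEN conjunct1] vspan_subset_Rn[OF V] by blast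
    have V': "V t \<subseteq> Rn (Suc t)" using V Rn_mono[of t "Suc t"] by auto
    show ?case
    proof (cases "prim t")
      case True
      then show ?thesis
        using step[OF tT] V' grad_fmu_in_Rn[OF y] grad_hmu_in_Rn[OF y] by simp
    next
      case False
      then show ?thesis
        using step[OF tT] V' mirror_pt_in_Rn[OF assms(1) y] by simp
    qed
  qed
  then show ?thesis using run[THEN conjunct2, THEN conjunct2] vspan_subset_Rn by blast
qed

end

theorem proposition3p8:
  fixes N n T :: nat and L \<mu> \<eta> :: real
    and V :: "nat \<Rightarrow> vec set" and y m :: "nat \<Rightarrow> vec" and prim :: "nat \<Rightarrow> bool"
    and xbar :: vec
  assumes "N \<ge> 1" and "n = 2 * N + 1" and "L > 0" and "0 < \<mu>" and "\<mu> < 1"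
    and "\<eta> > 4 * \<mu> * real n ^ 2"
    and "bregman_run n (fmu \<eta> \<mu> n) (hmu L \<eta> \<mu> n) (\<lambda>_. 0) T V y prim m xbar"
    and "card {t. t < T \<and> prim t} \<le> N"
    and "card {t. t < T \<and> \<not> prim t} \<le> N"
  shows "fmu \<eta> \<mu> n xbar - Inf (fmu \<eta> \<mu> n ` Rn n)
         \<ge> L * bregman n (hmu L \<eta> \<mu> n) (xstar \<eta> n) (\<lambda>_. 0) / real (2 * N + 1)
           * ((1 - \<mu>) / (1 + \<mu> + \<eta> + \<mu> / 2 * (1 + \<eta>)^2))"
proof -
  interpret hard_instance \<eta> \<mu> n
    using assms(2,4,6) by unfold_locales auto
  define D where "D = 1 + \<mu> + \<eta> + \<mu> / 2 * (1 + \<eta>)^2"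
  have D_pos: "0 < D" unfolding D_def using mu_pos eta_pos by (simp add: add_pos_nonneg)
  have "T \<le> 2 * N" using card_lessThan_filter_add[of T prim] assms(8,9) by linarith
  then have "xbar \<in> Rn (2 * N)"
    using bregman_run_output_in_Rn[OF assms(3,7)] Rn_mono by blast
  then have "1 - \<mu> / 2 \<le> fmu \<eta> \<mu> n xbar"
    using fmu_ge_coord[OF mu_pos, of "2 * N" n \<eta> xbar] xstar_ge_1[of \<eta> "2 * N" n] eta_pos assms(2)
    unfolding Rn_def by simp
  then have gap: "1 - \<mu> \<le> fmu \<eta> \<mu> n xbar - Inf (fmu \<eta> \<mu> n ` Rn n)"
    using Inf_fmu[OF n_pos mu_pos] mu_pos by simp
  have "L * bregman n (hmu L \<eta> \<mu> n) (xstar \<eta> n) (\<lambda>_. 0) / real (2 * N + 1) \<le> D"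
    using L_bregman_hmu_le[OF assms(3)] n_pos assms(2)
    unfolding D_def by (simp add: divide_le_eq mult.commute)
  then have "L * bregman n (hmu L \<eta> \<mu> n) (xstar \<eta> n) (\<lambda>_. 0) / real (2 * N + 1) * ((1 - \<mu>) / D)
      \<le> D * ((1 - \<mu>) / D)"
    using assms(5) D_pos by (intro mult_right_mono) auto
  then show ?thesis
    using gap D_pos unfolding D_def by simp
qed

end
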